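(* Let $0\le\alpha\le\beta$ and let $q=(q_n)$, $q_n\in(0,1)$, satisfy $st-\lim_n q_n=1$, $st-\lim_n q_n^n=a$ $(a<1)$ and $st-\lim_n 1/[n]_{q_n}=0$. Then for every bounded continuous function $f$ on $[0,\infty)$, $$st-\lim_{n\to\infty}\ \big\|\mathfrak{D}_n^{(\alpha,\beta)}(f;q_n;\cdot)-f\big\|_{\rho_0}=0,$$ where $\|g\|_{\rho_0}=\sup_{x\in[0,\infty)}\frac{|g(x)|}{1+x^2}$.
   Context: $q$-calculus notation, for $0<q<1$: $[n]_q=\frac{1-q^n}{1-q}$; $[k]_q!=[k]_q[k-1]_q\cdots[1]_q$ with $[0]_q!=1$; $\left[\begin{array}{c}n\\k\end{array}\right]_q=\frac{[n]_q!}{[k]_q!\,[n-k]_q!}$; $(1+x)_q^m=(1+x)(1+qx)\cdots(1+q^{m-1}x)$ with $(1+x)_q^0=1$. The $q$-exponential is $E_q(z)=\sum_{k=0}^\infty q^{k(k-1)/2}\frac{z^k}{[k]_q!}=\prod_{j=0}^\infty(1+(1-q)q^jz)$. The $q$-Jackson integral is $\int_0^a g(t)\,d_qt=(1-q)a\sum_{j=0}^\infty g(aq^j)q^j$. For $n\in\mathbb N$, $0<q<1$, $x\in[0,\infty)$ define $p^q_{n,k}(x)=\left[\begin{array}{c}n+k-1\\k\end{array}\right]_q q^{k(k-1)/2}\frac{x^k}{(1+x)_q^{n+k}}$ and $s^q_{n,k}(t)=E_q(-[n]_qt)\frac{([n]_qt)^k}{[k]_q!}$. The $q$-Baskakov–Szász–Stancu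 operators with parameters $0\le\alpha\le\beta$ are $$\mathfrak{D}_n^{(\alpha,\beta)}(f;q;x)=[n]_q\sum_{k=0}^\infty p^q_{n,k}(x)\int_0^{q/(1-q^n)} q^{-k-1}s^q_{n,k}(t)\, f\!\left(\frac{[n]_q t q^{-k}+\alpha}{[n]_q+\beta}\right)d_qt .$$ With $q=q_n$, $[n]_q$ means $[n]_{q_n}$. Statistical convergence: for $K\subseteq\mathbb N$, its natural density is $\delta(K)=\lim_n \frac1n|\{j\le n: j\in K\}|$ (if it exists). A real sequence $(x_j)$ is statistically convergent to $L$, written $st-\lim_n x_n=L$, if for every $\epsilon>0$, $\delta(\{j:|x_j-L|\ge\epsilon\})=0$. *)

theory Defs
  imports "HOL-Analysis.Analysis"
begin

definition qint :: "real \<Rightarrow> nat \<Rightarrow> real" where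
  "qint q n = (1 - q ^ n) / (1 - q)"

definition qfact :: "real \<Rightarrow> nat \<Rightarrow> real" where
  "qfact q k = (\<Prod>i\<in>{1..k}. qint q i)"

definition qbinom :: "real \<Rightarrow> nat \<Rightarrow> nat \<Rightarrow> real" where
  "qbinom q n k = qfact q n / (qfact q k * qfact q (n - k))"

definition qpoch :: "real \<Rightarrow> real \<Rightarrow> nat \<Rightarrow> real" where
  "qpoch q x m = (\<Prod>i<m. 1 + q ^ i * x)"

definition qexp :: "real \<Rightarrow> real \<Rightarrow> real" where
  "qexp q z = (\<Sum>k. q ^ (k * (k - 1) div 2) * z ^ k / qfact q k)"

definition qjackson :: "real \<Rightarrow> real \<Rightarrow> (real \<Rightarrow> real) \<Rightarrow> real" where
  "qjackson q a g = (1 - q) * a * (\<Sum>j. g (a * q ^ j) * q ^ j)"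

definition pqBS :: "real \<Rightarrow> nat \<Rightarrow> nat \<Rightarrow> real \<Rightarrow> real" where
  "pqBS q n k x = qbinom q (n + k - 1) k * q ^ (k * (k - 1) div 2) * x ^ k / qpoch q x (n + k)"

definition sqBS :: "real \<Rightarrow> nat \<Rightarrow> nat \<Rightarrow> real \<Rightarrow> real" where
  "sqBS q n k t = qexp q (- qint q n * t) * (qint q n * t) ^ k / qfact q k"

definition BSS_op :: "real \<Rightarrow> real \<Rightarrow> nat \<Rightarrow> real \<Rightarrow> (real \<Rightarrow> real) \<Rightarrow> real \<Rightarrow> real" where
  "BSS_op \<alpha> \<beta> n q f x = qint q n * (\<Sum>k. pqBS q n k x *
      qjackson q (q / (1 - q ^ n))
        (\<lambda>t. (1 / q ^ (k + 1)) * sqBS q n k t *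
              f ((qint q n * t / q ^ k + \<alpha>) / (qint q n + \<beta>))))"

definition st_lim :: "(nat \<Rightarrow> real) \<Rightarrow> real \<Rightarrow> bool" where
  "st_lim x L \<longleftrightarrow> (\<forall>\<epsilon>>0. (\<lambda>n. real (card {j \<in> {1..n}. \<bar>x j - L\<bar> \<ge> \<epsilon>}) / real n)
      \<longlonglongrightarrow> 0)"

definition rho0_norm :: "(real \<Rightarrow> real) \<Rightarrow> real" where
  "rho0_norm g = (SUP x\<in>{0..}. \<bar>g x\<bar> / (1 + x\<^sup>2))"

end

theory Submission
  imports Defs
begin

text \<open>The operator is a positive linear operator written as a double average: over k with the
  q-Baskakov weights p_{n,k}(x), and over the nodes of the Jackson integral with the
  q-Szasz weights.  Both families of weights are nonnegative and sum to one (a q-binomial series,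
  and a telescoping identity for E_q at the Jackson nodes), and their first two moments are
  explicit, so the operator applied to (t - x)^2 is at most C (1 + x^2) / [n]_q once q >= 1/2.
  A bounded continuous f satisfies |f y - f x| <= eps + L (y - x)^2 for x in [0, R], while for
  x > R the weight 1 / (1 + x^2) makes the error at most 2 sup|f| / (1 + R^2).  Hence the weighted
  norm is below eps whenever 1/[n]_q is small enough (which also forces q >= 1/2, as
  1 - q <= 1/[n]_q), and the statistical convergence of 1/[n]_q to 0 transfers to the norm.\<close>

lemma sums_abs_le:
  fixes a b :: "nat \<Rightarrow> real"
  assumes "\<And>i. \<bar>a i\<bar> \<le> b i" and "a sums S" and "b sums T"
  shows "\<bar>S\<bar> \<le> T"
proof -
  have "S \<le> T" using abs_le_D1[OF assms(1)] assms(2,3) by (rule sums_le)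
  moreover have "-S \<le> T" using abs_le_D2[OF assms(1)] sums_minus[OF assms(2)] assms(3) by (rule sums_le)
  ultimately show ?thesis by simp
qed

lemma summable_weighted_bounded:
  fixes w g :: "nat \<Rightarrow> real"
  assumes "summable w" and "\<And>j. 0 \<le> w j" and "\<And>j. \<bar>g j\<bar> \<le> M"
  shows "summable (\<lambda>j. w j * g j)"
proof (rule summable_comparison_test)
  show "\<exists>N. \<forall>j\<ge>N. norm (w j * g j) \<le> M * w j"
  proof (intro exI allI impI)
    fix j
    have "w j * \<bar>g j\<bar> \<le> w j * M" using assms(3)[of j] assms(2)[of j] by (rule mult_left_mono)
    then show "norm (w j * g j) \<le> M * w j" using assms(2)[of j] by (simp add: abs_mult mult.commute)
  qed
  show "summable (\<lambda>j. M * w j)" using assms(1) by (rule summable_mult)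
qed

lemma weighted_mean_dev_le:
  fixes w g v :: "nat \<Rightarrow> real"
  assumes "w sums 1" and "\<And>j. 0 \<le> w j"
    and "(\<lambda>j. w j * g j) sums G" and "(\<lambda>j. w j * v j) sums V"
    and "\<And>j. \<bar>g j - c\<bar> \<le> E + L * v j"
  shows "\<bar>G - c\<bar> \<le> E + L * V"
proof -
  have dev: "(\<lambda>j. w j * g j - w j * c) sums (G - 1 * c)"
    by (intro sums_diff assms(3) sums_mult2 assms(1))
  have bound: "(\<lambda>j. E * w j + L * (w j * v j)) sums (E * 1 + L * V)"
    by (intro sums_add sums_mult assms(1,4))
  have "\<bar>w j * g j - w j * c\<bar> \<le> E * w j + L * (w j * v j)" for j
  proof -
    have "\<bar>w j * g j - w j * c\<bar> = w j * \<bar>g j - c\<bar>"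
      using assms(2)[of j] by (simp add: abs_mult right_diff_distrib[symmetric])
    also have "\<dots> \<le> w j * (E + L * v j)" using assms(5)[of j] assms(2)[of j] by (rule mult_left_mono)
    also have "\<dots> = E * w j + L * (w j * v j)" by (simp add: algebra_simps)
    finally show ?thesis .
  qed
  then have "\<bar>G - 1 * c\<bar> \<le> E * 1 + L * V" using dev bound by (rule sums_abs_le)
  then show ?thesis by simp
qed

lemma st_lim_transfer:
  assumes "st_lim g a"
    and "\<And>\<epsilon>. 0 < \<epsilon> \<Longrightarrow> \<exists>\<eta>>0. \<forall>n\<ge>1. \<bar>g n - a\<bar> < \<eta> \<longrightarrow> \<bar>h n - b\<bar> < \<epsilon>"
  shows "st_lim h b"
  unfolding st_lim_def
proof (intro allI impI)
  fix \<epsilon> :: real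
  assume "0 < \<epsilon>"
  then obtain \<eta> where "0 < \<eta>" and \<eta>: "\<And>n. 1 \<le> n \<Longrightarrow> \<bar>g n - a\<bar> < \<eta> \<Longrightarrow> \<bar>h n - b\<bar> < \<epsilon>"
    using assms(2) by blast
  have "card {j \<in> {1..n}. \<epsilon> \<le> \<bar>h j - b\<bar>} \<le> card {j \<in> {1..n}. \<eta> \<le> \<bar>g j - a\<bar>}" for n
  proof (rule card_mono)
    show "finite {j \<in> {1..n}. \<eta> \<le> \<bar>g j - a\<bar>}" by simp
    show "{j \<in> {1..n}. \<epsilon> \<le> \<bar>h j - b\<bar>} \<subseteq> {j \<in> {1..n}. \<eta> \<le> \<bar>g j - a\<bar>}"
      using \<eta> by (auto simp: not_less[symmetric])
  qed
  then have "\<forall>\<^sub>F n in sequentially. norm (real (card {j \<in> {1..n}. \<epsilon> \<le> \<bar>h j - b\<bar>}) / real n)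
      \<le> real (card {j \<in> {1..n}. \<eta> \<le> \<bar>g j - a\<bar>}) / real n"
    by (intro always_eventually allI) (simp add: divide_right_mono)
  moreover have "(\<lambda>n. real (card {j \<in> {1..n}. \<eta> \<le> \<bar>g j - a\<bar>}) / real n) \<longlonglongrightarrow> 0"
    using assms(1) \<open>0 < \<eta>\<close> unfolding st_lim_def by blast
  ultimately show "(\<lambda>n. real (card {j \<in> {1..n}. \<epsilon> \<le> \<bar>h j - b\<bar>}) / real n) \<longlonglongrightarrow> 0"
    by (rule Lim_null_comparison)
qed

lemma rho0_norm_le:
  assumes "\<And>x. 0 \<le> x \<Longrightarrow> \<bar>g x\<bar> \<le> B * (1 + x\<^sup>2)"
  shows "0 \<le> rho0_norm g" and "rho0_norm g \<le> B"
proof -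
  have bound: "\<bar>g x\<bar> / (1 + x\<^sup>2) \<le> B" if "x \<in> {0..}" for x
    using assms[of x] that by (simp add: add_pos_nonneg divide_le_eq)
  then have "bdd_above ((\<lambda>x. \<bar>g x\<bar> / (1 + x\<^sup>2)) ` {0..})"
    by (intro bdd_aboveI2) blast
  then show "0 \<le> rho0_norm g"
    unfolding rho0_norm_def by (rule cSUP_upper2[of _ _ 0]) auto
  show "rho0_norm g \<le> B"
    unfolding rho0_norm_def using bound by (intro cSUP_least) auto
qed

lemma bounded_continuous_quadratic_majorant:
  fixes f :: "real \<Rightarrow> real"
  assumes "continuous_on {0..} f" and f_bounded: "\<And>y. 0 \<le> y \<Longrightarrow> \<bar>f y\<bar> \<le> M" and "0 < \<epsilon>"
  obtains L where "0 \<le> L"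
    and "\<And>x y. 0 \<le> x \<Longrightarrow> x \<le> R \<Longrightarrow> 0 \<le> y \<Longrightarrow> \<bar>f y - f x\<bar> \<le> \<epsilon> + L * (y - x)\<^sup>2"
proof -
  have "uniformly_continuous_on {0..R + 1} f"
    using assms(1) by (intro compact_uniformly_continuous) (auto intro: continuous_on_subset)
  then obtain d where "0 < d"
    and d: "\<And>x y. x \<in> {0..R + 1} \<Longrightarrow> y \<in> {0..R + 1} \<Longrightarrow> dist y x < d \<Longrightarrow> dist (f y) (f x) < \<epsilon>"
    using \<open>0 < \<epsilon>\<close> unfolding uniformly_continuous_on_def by metis
  define \<delta> where "\<delta> = min d 1"
  have "0 < \<delta>" unfolding \<delta>_def using \<open>0 < d\<close> by simp
  define L where "L = 2 * M / \<delta>\<^sup>2"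
  have "0 \<le> M" using f_bounded[of 0] by simp
  then have "0 \<le> L" unfolding L_def by simp
  moreover have "\<bar>f y - f x\<bar> \<le> \<epsilon> + L * (y - x)\<^sup>2" if "0 \<le> x" "x \<le> R" "0 \<le> y" for x y
  proof (cases "\<bar>y - x\<bar> < \<delta>")
    case True
    then have "dist (f y) (f x) < \<epsilon>"
      using that unfolding \<delta>_def by (intro d) (auto simp: dist_real_def)
    then show ?thesis using \<open>0 \<le> L\<close> by (simp add: dist_real_def add_increasing2)
  next
    case False
    then have "\<delta>\<^sup>2 \<le> (y - x)\<^sup>2"
      using power_mono[of \<delta> "\<bar>y - x\<bar>" 2] \<open>0 < \<delta>\<close> by simp
    then have "L * \<delta>\<^sup>2 \<le> L * (y - x)\<^sup>2"
      using \<open>0 \<le> L\<close> by (rule mult_left_mono)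
    moreover have "L * \<delta>\<^sup>2 = 2 * M" unfolding L_def using \<open>0 < \<delta>\<close> by simp
    moreover have "\<bar>f y - f x\<bar> \<le> 2 * M" using f_bounded that by (smt (verit))
    ultimately show ?thesis using \<open>0 < \<epsilon>\<close> by simp
  qed
  ultimately show ?thesis by (rule that)
qed

lemma triangle_Suc: "Suc k * (Suc k - 1) div 2 = k * (k - 1) div 2 + k"
proof -
  have "Suc k * (Suc k - 1) = k * (k - 1) + 2 * k" by (cases k) (auto simp: algebra_simps)
  then show ?thesis by simp
qed

lemma qfact_0 [simp]: "qfact q 0 = 1"
  by (simp add: qfact_def)

text \<open>At the Jackson nodes t_j = q^(j+1) / (1 - q^n) of the operator one has
  [n]_q t_j = q^(j+1) / (1 - q), so the factor E_q(-[n]_q t_j) of the q-Szasz basis is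
  qexp_node q (j + 1), independently of n.\<close>

definition qexp_node :: "real \<Rightarrow> nat \<Rightarrow> real" where
  "qexp_node q j = qexp q (-(q ^ j / (1 - q)))"

definition jackson_gamma :: "real \<Rightarrow> nat \<Rightarrow> real" where
  "jackson_gamma q m = (\<Sum>j. q ^ (j * m) * qexp_node q (Suc j))"

text \<open>This is the q-integer [k] for the base 1/q.\<close>

definition qint_recip :: "real \<Rightarrow> nat \<Rightarrow> real" where
  "qint_recip q k = q * qint q k / q ^ k"

locale qparam =
  fixes q :: real
  assumes q_pos: "0 < q" and q_less_1: "q < 1"
begin

lemma q_power_less_1: "0 < m \<Longrightarrow> q ^ m < 1"
  using q_pos q_less_1 power_less_one_iff[of q m] by simp

lemma q_power_le_1: "q ^ m \<le> 1"
  using q_pos q_less_1 by (simp add: power_le_one)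

lemma qint_Suc: "qint q (Suc n) = qint q n + q ^ n"
  using q_less_1 by (simp add: qint_def field_simps)

lemma qint_Suc_left: "qint q (Suc n) = 1 + q * qint q n"
  using q_less_1 by (simp add: qint_def field_simps)

lemma qint_add: "qint q (a + b) = qint q a + q ^ a * qint q b"
  using q_less_1 unfolding qint_def by (simp add: power_add field_simps)

lemma qint_ge_1: "1 \<le> n \<Longrightarrow> 1 \<le> qint q n"
proof -
  assume "1 \<le> n"
  then have "q ^ n \<le> q ^ 1" using q_pos q_less_1 by (intro power_decreasing) auto
  then show ?thesis using q_less_1 by (simp add: qint_def field_simps)
qed

lemma qint_pos: "0 < n \<Longrightarrow> 0 < qint q n"
  using qint_ge_1[of n] by simp

lemma one_minus_q_le_inverse_qint: "1 \<le> n \<Longrightarrow> 1 - q \<le> 1 / qint q n"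
proof -
  assume "1 \<le> n"
  then have "0 < 1 - q ^ n" using q_power_less_1[of n] by simp
  moreover have "1 - q ^ n \<le> 1" using q_pos by simp
  ultimately have "(1 - q) / 1 \<le> (1 - q) / (1 - q ^ n)"
    using q_less_1 by (intro divide_left_mono) auto
  then show ?thesis by (simp add: qint_def)
qed

lemma qfact_Suc: "qfact q (Suc k) = qfact q k * qint q (Suc k)"
  unfolding qfact_def by (simp add: prod.atLeast1_atMost_eq)

lemma qfact_ge_1: "1 \<le> qfact q k"
proof (induction k)
  case (Suc k)
  have "1 * 1 \<le> qfact q k * qint q (Suc k)"
    using Suc qint_ge_1[of "Suc k"] by (intro mult_mono) auto
  then show ?case by (simp add: qfact_Suc)
qed simp

lemma qfact_pos: "0 < qfact q k"
  using qfact_ge_1[of k] by simp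

lemma qexp_summable: "summable (\<lambda>k. q ^ (k * (k - 1) div 2) * z ^ k / qfact q k)"
proof -
  define g where "g k = q ^ (k * (k - 1) div 2) * \<bar>z\<bar> ^ k" for k
  have "(\<lambda>N. q ^ N * \<bar>z\<bar>) \<longlonglongrightarrow> 0 * \<bar>z\<bar>"
    using q_pos q_less_1 by (intro tendsto_mult LIMSEQ_power_zero tendsto_const) auto
  then have "eventually (\<lambda>N. q ^ N * \<bar>z\<bar> < 1/2) sequentially"
    by (intro order_tendstoD(2)) auto
  then obtain N where N: "\<And>n. n \<ge> N \<Longrightarrow> q ^ n * \<bar>z\<bar> < 1/2"
    unfolding eventually_sequentially by blast
  have "summable g"
  proof (rule summable_ratio_test[of "1/2" N])
    fix n assume "n \<ge> N"
    have "g (Suc n) = (q ^ n * \<bar>z\<bar>) * g n"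
      unfolding g_def triangle_Suc by (simp add: power_add)
    moreover have "0 \<le> g n" using q_pos by (simp add: g_def)
    moreover have "(q ^ n * \<bar>z\<bar>) * g n \<le> 1/2 * g n"
      using N[OF \<open>n \<ge> N\<close>] \<open>0 \<le> g n\<close> by (intro mult_right_mono) auto
    ultimately show "norm (g (Suc n)) \<le> 1/2 * norm (g n)"
      using q_pos by simp
  qed simp
  moreover have "norm (q ^ (k * (k - 1) div 2) * z ^ k / qfact q k) \<le> g k" for k
  proof -
    have "norm (q ^ (k * (k - 1) div 2) * z ^ k / qfact q k) = g k / qfact q k"
      using q_pos qfact_pos[of k] by (simp add: g_def abs_mult power_abs)
    also have "\<dots> \<le> g k / 1"
      using qfact_ge_1[of k] q_pos by (intro divide_left_mono) (auto simp: g_def)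
    finally show ?thesis by simp
  qed
  ultimately show ?thesis by (rule summable_comparison_test'[of g 0])
qed

lemma qexp_sums: "(\<lambda>k. q ^ (k * (k - 1) div 2) * z ^ k / qfact q k) sums qexp q z"
  unfolding qexp_def by (rule summable_sums[OF qexp_summable])

lemma qexp_functional_eq: "qexp q y = (1 + (1 - q) * y) * qexp q (q * y)"
proof -
  let ?a = "\<lambda>k. q ^ (k * (k - 1) div 2) * y ^ k / qfact q k"
  let ?b = "\<lambda>k. q ^ (k * (k - 1) div 2) * (q * y) ^ k / qfact q k"
  have shift: "?a (Suc m) - ?b (Suc m) = (1 - q) * y * ?b m" for m
  proof -
    define T where "T = q ^ (m * (m - 1) div 2)"
    define F where "F = qfact q m"
    have I: "qint q (Suc m) = (1 - q * q ^ m) / (1 - q)" by (simp add: qint_def)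
    have "?a (Suc m) - ?b (Suc m)
        = T * q ^ m * y * y ^ m * (1 - q * q ^ m) / (F * qint q (Suc m))"
      unfolding triangle_Suc T_def F_def
      by (simp add: qfact_Suc power_add power_mult_distrib diff_divide_distrib[symmetric]
          algebra_simps)
    also have "\<dots> = (1 - q) * y * (T * (q * y) ^ m / F)"
    proof -
      have "0 < F" using qfact_pos unfolding F_def by simp
      moreover have "1 - q * q ^ m \<noteq> 0" using q_power_less_1[of "Suc m"] by simp
      ultimately show ?thesis unfolding I using q_less_1 by (simp add: power_mult_distrib field_simps)
    qed
    finally show ?thesis unfolding T_def F_def .
  qed
  have "(\<lambda>k. ?a k - ?b k) sums (qexp q y - qexp q (q * y))"
    by (intro sums_diff qexp_sums)
  then have "(\<lambda>k. ?a (Suc k) - ?b (Suc k)) sums (qexp q y - qexp q (q * y))"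
    using sums_Suc_iff[of "\<lambda>k. ?a k - ?b k"] by simp
  then have "(\<lambda>k. (1 - q) * y * ?b k) sums (qexp q y - qexp q (q * y))"
    unfolding shift .
  moreover have "(\<lambda>k. (1 - q) * y * ?b k) sums ((1 - q) * y * qexp q (q * y))"
    by (intro sums_mult qexp_sums)
  ultimately have "qexp q y - qexp q (q * y) = (1 - q) * y * qexp q (q * y)"
    by (rule sums_unique2)
  then show ?thesis by (simp add: algebra_simps)
qed

lemma qexp_near_0:
  assumes "\<bar>y\<bar> \<le> 1/2"
  shows "\<bar>qexp q y - 1\<bar> \<le> 2 * \<bar>y\<bar>"
proof -
  let ?a = "\<lambda>k. q ^ (k * (k - 1) div 2) * y ^ k / qfact q k"
  have "(\<lambda>k. ?a (Suc k)) sums (qexp q y - 1)"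
    using qexp_sums[of y] sums_Suc_iff[of ?a "qexp q y - 1"] by simp
  moreover have "(\<lambda>k. \<bar>y\<bar> * \<bar>y\<bar> ^ k) sums (\<bar>y\<bar> * (1 / (1 - \<bar>y\<bar>)))"
    using assms by (intro sums_mult geometric_sums) auto
  moreover have "\<bar>?a (Suc k)\<bar> \<le> \<bar>y\<bar> * \<bar>y\<bar> ^ k" for k
  proof -
    have "\<bar>?a (Suc k)\<bar> = q ^ (Suc k * (Suc k - 1) div 2) * \<bar>y\<bar> ^ Suc k / qfact q (Suc k)"
      using q_pos qfact_pos[of "Suc k"] by (simp add: abs_mult power_abs)
    also have "\<dots> \<le> q ^ (Suc k * (Suc k - 1) div 2) * \<bar>y\<bar> ^ Suc k / 1"
      using qfact_ge_1[of "Suc k"] q_pos by (intro divide_left_mono) auto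
    also have "\<dots> \<le> 1 * \<bar>y\<bar> ^ Suc k"
      using q_power_le_1 by (simp only: div_by_1, intro mult_right_mono) auto
    finally show ?thesis by simp
  qed
  ultimately have "\<bar>qexp q y - 1\<bar> \<le> \<bar>y\<bar> * (1 / (1 - \<bar>y\<bar>))"
    by (rule sums_abs_le[rotated])
  also have "\<dots> \<le> \<bar>y\<bar> * (1 / (1/2))"
    using assms by (intro mult_left_mono divide_left_mono) auto
  finally show ?thesis by simp
qed

lemma qexp_node_rec: "qexp_node q j = (1 - q ^ j) * qexp_node q (Suc j)"
proof -
  have "qexp_node q j = (1 + (1 - q) * (-(q ^ j / (1 - q)))) * qexp q (q * (-(q ^ j / (1 - q))))"
    unfolding qexp_node_def by (rule qexp_functional_eq)
  also have "1 + (1 - q) * (-(q ^ j / (1 - q))) = 1 - q ^ j"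
    using q_less_1 by (simp add: field_simps)
  also have "q * (-(q ^ j / (1 - q))) = -(q ^ Suc j / (1 - q))" by simp
  finally show ?thesis by (simp add: qexp_node_def)
qed

lemma qexp_node_0: "qexp_node q 0 = 0"
  using qexp_node_rec[of 0] by simp

lemma qexp_node_tendsto_1: "qexp_node q \<longlonglongrightarrow> 1"
proof -
  have small: "(\<lambda>j. q ^ j / (1 - q)) \<longlonglongrightarrow> 0"
    using q_pos q_less_1 by (intro tendsto_divide_zero LIMSEQ_power_zero) auto
  have "(\<lambda>j. qexp_node q j - 1) \<longlonglongrightarrow> 0"
  proof (rule Lim_null_comparison)
    have "eventually (\<lambda>j. q ^ j / (1 - q) < 1/2) sequentially"
      by (rule order_tendstoD(2)[OF small]) simp
    then show "eventually (\<lambda>j. norm (qexp_node q j - 1) \<le> 2 * (q ^ j / (1 - q))) sequentially"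
    proof (rule eventually_mono)
      fix j
      define y where "y = q ^ j / (1 - q)"
      assume "q ^ j / (1 - q) < 1/2"
      then have "y < 1/2" by (simp add: y_def)
      moreover have "0 \<le> y" using q_pos q_less_1 by (simp add: y_def)
      ultimately have "\<bar>qexp q (-y) - 1\<bar> \<le> 2 * \<bar>-y\<bar>"
        by (intro qexp_near_0) simp
      then show "norm (qexp_node q j - 1) \<le> 2 * (q ^ j / (1 - q))"
        unfolding qexp_node_def y_def[symmetric] using \<open>0 \<le> y\<close> by simp
    qed
    show "(\<lambda>j. 2 * (q ^ j / (1 - q))) \<longlonglongrightarrow> 0"
      using tendsto_mult_right_zero[OF small, of 2] by simp
  qed
  then show ?thesis by (rule LIM_zero_cancel)
qed

text \<open>By the recursion the nodes are monotone from index 1 on, so both bounds follow from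
  the limit 1: a negative node would force all later nodes below it.\<close>

lemma qexp_node_nonneg: "0 \<le> qexp_node q (Suc j)"
proof (rule ccontr)
  assume neg: "\<not> 0 \<le> qexp_node q (Suc j)"
  have "qexp_node q (Suc j + i) \<le> qexp_node q (Suc j)" for i
  proof (induction i)
    case (Suc i)
    let ?m = "Suc j + i"
    have f: "0 < 1 - q ^ ?m" "1 - q ^ ?m \<le> 1"
      using q_pos q_power_less_1[of ?m] by auto
    have "qexp_node q ?m < 0" using Suc neg by simp
    moreover have r: "qexp_node q ?m = (1 - q ^ ?m) * qexp_node q (Suc ?m)"
      by (rule qexp_node_rec)
    ultimately have "qexp_node q (Suc ?m) < 0"
      using f by (simp add: mult_less_0_iff)
    then have "1 * qexp_node q (Suc ?m) \<le> (1 - q ^ ?m) * qexp_node q (Suc ?m)"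
      using f by (intro mult_right_mono_neg) auto
    then show ?case using r Suc by simp
  qed simp
  then have "\<forall>n\<ge>Suc j. qexp_node q n \<le> qexp_node q (Suc j)"
    by (auto dest!: le_Suc_ex)
  then have "1 \<le> qexp_node q (Suc j)"
    by (intro LIMSEQ_le_const2[OF qexp_node_tendsto_1]) blast
  then show False using neg by simp
qed

lemma qexp_node_le_1: "qexp_node q (Suc j) \<le> 1"
proof -
  have "qexp_node q (Suc j) \<le> qexp_node q (Suc j + i)" for i
  proof (induction i)
    case (Suc i)
    let ?m = "Suc j + i"
    have "qexp_node q ?m = (1 - q ^ ?m) * qexp_node q (Suc ?m)" by (rule qexp_node_rec)
    also have "\<dots> \<le> 1 * qexp_node q (Suc ?m)"
      using q_pos qexp_node_nonneg[of ?m] by (intro mult_right_mono) auto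
    finally show ?case using Suc by simp
  qed simp
  then have "\<forall>n\<ge>Suc j. qexp_node q (Suc j) \<le> qexp_node q n"
    by (auto dest!: le_Suc_ex)
  then show ?thesis
    by (intro LIMSEQ_le_const[OF qexp_node_tendsto_1]) blast
qed

lemma jackson_gamma_sums: "0 < m \<Longrightarrow> (\<lambda>j. q ^ (j * m) * qexp_node q (Suc j)) sums jackson_gamma q m"
proof -
  assume "0 < m"
  then have geometric: "summable (\<lambda>j. (q ^ m) ^ j)"
    using q_pos q_power_less_1[of m] by (intro summable_geometric) simp
  have "\<forall>j. norm (q ^ (j * m) * qexp_node q (Suc j)) \<le> (q ^ m) ^ j"
  proof
    fix j
    have "norm (q ^ (j * m) * qexp_node q (Suc j)) = q ^ (j * m) * qexp_node q (Suc j)"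
      using q_pos qexp_node_nonneg[of j] by simp
    also have "\<dots> \<le> q ^ (j * m) * 1"
      using q_pos qexp_node_le_1[of j] by (intro mult_left_mono) auto
    also have "\<dots> = (q ^ m) ^ j"
      by (simp only: mult_1_right mult.commute[of j m] power_mult)
    finally show "norm (q ^ (j * m) * qexp_node q (Suc j)) \<le> (q ^ m) ^ j" .
  qed
  then have "summable (\<lambda>j. q ^ (j * m) * qexp_node q (Suc j))"
    by (rule summable_comparison_test_ev[OF always_eventually geometric])
  then show ?thesis unfolding jackson_gamma_def by (rule summable_sums)
qed

lemma jackson_gamma_1: "jackson_gamma q 1 = 1"
proof -
  have "(\<lambda>j. qexp_node q (Suc j) - qexp_node q j) sums (1 - qexp_node q 0)"
    by (rule telescope_sums[OF qexp_node_tendsto_1])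
  moreover have "qexp_node q (Suc j) - qexp_node q j = q ^ (j * 1) * qexp_node q (Suc j)" for j
    using qexp_node_rec[of j] by (simp add: algebra_simps)
  ultimately have "(\<lambda>j. q ^ (j * 1) * qexp_node q (Suc j)) sums 1"
    using qexp_node_0 by simp
  then show ?thesis using sums_unique2[OF jackson_gamma_sums[of 1]] by simp
qed

lemma jackson_gamma_Suc: "0 < m \<Longrightarrow> jackson_gamma q (Suc m) = (1 - q ^ m) * jackson_gamma q m"
proof -
  assume m: "0 < m"
  have "(\<lambda>j. q ^ (j * m) * qexp_node q (Suc j) - q ^ (j * Suc m) * qexp_node q (Suc j))
      sums (jackson_gamma q m - jackson_gamma q (Suc m))"
    using m by (intro sums_diff jackson_gamma_sums) auto
  moreover have "q ^ (j * m) * qexp_node q (Suc j) - q ^ (j * Suc m) * qexp_node q (Suc j)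
      = q ^ (j * m) * qexp_node q j" for j
    by (subst qexp_node_rec[of j]) (simp add: power_add algebra_simps)
  ultimately have diff: "(\<lambda>j. q ^ (j * m) * qexp_node q j) sums (jackson_gamma q m - jackson_gamma q (Suc m))"
    by simp
  have "(\<lambda>j. q ^ m * (q ^ (j * m) * qexp_node q (Suc j))) sums (q ^ m * jackson_gamma q m)"
    using m by (intro sums_mult jackson_gamma_sums)
  moreover have "q ^ m * (q ^ (j * m) * qexp_node q (Suc j)) = q ^ (Suc j * m) * qexp_node q (Suc j)" for j
    by (simp add: power_add)
  ultimately have "(\<lambda>j. q ^ (Suc j * m) * qexp_node q (Suc j)) sums (q ^ m * jackson_gamma q m)"
    by simp
  then have "(\<lambda>j. q ^ (j * m) * qexp_node q j) sums (q ^ m * jackson_gamma q m)"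
    using sums_Suc_iff[of "\<lambda>j. q ^ (j * m) * qexp_node q j"] qexp_node_0 by simp
  with diff have "jackson_gamma q m - jackson_gamma q (Suc m) = q ^ m * jackson_gamma q m"
    by (rule sums_unique2)
  then show ?thesis by (simp add: algebra_simps)
qed

lemma jackson_gamma_qfact: "jackson_gamma q (Suc k) = qfact q k * (1 - q) ^ k"
proof (induction k)
  case 0
  then show ?case using jackson_gamma_1 by simp
next
  case (Suc k)
  have "jackson_gamma q (Suc (Suc k)) = (1 - q ^ Suc k) * jackson_gamma q (Suc k)"
    by (rule jackson_gamma_Suc) simp
  also have "1 - q ^ Suc k = qint q (Suc k) * (1 - q)"
    using q_less_1 by (simp add: qint_def)
  finally show ?case using Suc by (simp add: qfact_Suc)
qed

lemma jackson_gamma_pos: "0 < jackson_gamma q (Suc k)"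
  using jackson_gamma_qfact[of k] qfact_pos[of k] q_less_1 by simp

lemma qbinom_0: "qbinom q m 0 = 1"
  unfolding qbinom_def using qfact_pos[of m] by simp

lemma qbinom_diag: "qbinom q m m = 1"
  unfolding qbinom_def using qfact_pos[of m] by simp

lemma qbinom_nonneg: "0 \<le> qbinom q m k"
  unfolding qbinom_def using qfact_pos by (simp add: less_imp_le)

lemma qbinom_absorb:
  "qbinom q (Suc m + k) (Suc k) * qint q (Suc k) = qint q (Suc m) * qbinom q (Suc m + k) k"
proof -
  have idx: "Suc m + k - Suc k = m" "Suc m + k - k = Suc m" by simp_all
  show ?thesis
    unfolding qbinom_def idx qfact_Suc[of k] qfact_Suc[of m]
    using qfact_pos[of k] qfact_pos[of m] qint_pos[of "Suc k"] qint_pos[of "Suc m"]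
    by (simp add: field_simps)
qed

lemma qbinom_pascal:
  "qbinom q (Suc m + Suc k) (Suc k) = qbinom q (Suc m + k) (Suc k) + q ^ Suc m * qbinom q (Suc m + k) k"
proof -
  have diff: "Suc m + Suc k - Suc k = Suc m" "Suc m + k - Suc k = m" "Suc m + k - k = Suc m"
    by simp_all
  have fact: "qfact q (Suc m + Suc k) = qfact q (Suc m + k) * qint q (Suc m + Suc k)"
    using qfact_Suc by simp
  have "qint q (Suc m + Suc k) = qint q (Suc m) + q ^ Suc m * qint q (Suc k)"
    by (rule qint_add)
  then show ?thesis
    unfolding qbinom_def diff fact qfact_Suc[of k] qfact_Suc[of m]
    using qfact_pos[of k] qfact_pos[of m] qfact_pos[of "Suc m + k"]
      qint_pos[of "Suc k"] qint_pos[of "Suc m"]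
    by (simp add: field_simps)
qed

lemma qpoch_Suc: "qpoch q x (Suc m) = qpoch q x m * (1 + q ^ m * x)"
  unfolding qpoch_def by simp

lemma qpoch_pos: "0 \<le> x \<Longrightarrow> 0 < qpoch q x m"
  unfolding qpoch_def using q_pos by (intro prod_pos) (auto intro: add_pos_nonneg)


lemma qint_recip_0: "qint_recip q 0 = 0"
  by (simp add: qint_recip_def qint_def)

lemma qint_recip_Suc: "qint_recip q (Suc k) = qint q (Suc k) / q ^ k"
  unfolding qint_recip_def using q_pos by simp

lemma qint_recip_Suc_rec: "qint_recip q (Suc k) = 1 + qint_recip q k / q"
  unfolding qint_recip_Suc qint_recip_def qint_Suc using q_pos by (simp add: field_simps)

context
  fixes x :: real
  assumes x_nonneg: "0 \<le> x"
begin

lemma pqBS_nonneg: "0 \<le> pqBS q n k x"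
  unfolding pqBS_def using qbinom_nonneg qpoch_pos[OF x_nonneg, of "n + k"] x_nonneg q_pos
  by (intro divide_nonneg_pos mult_nonneg_nonneg) auto

lemma pqBS_absorb:
  assumes "0 < n"
  shows "pqBS q n (Suc k) x * qint_recip q (Suc k) = qint q n * x * pqBS q (Suc n) k x"
proof -
  obtain m where n: "n = Suc m" using assms by (cases n) auto
  have idx: "Suc m + Suc k - 1 = Suc m + k" "Suc (Suc m) + k - 1 = Suc m + k"
     "Suc (Suc m) + k = Suc m + Suc k" by simp_all
  have tri: "q ^ (Suc k * (Suc k - 1) div 2) = q ^ (k * (k - 1) div 2) * q ^ k"
    unfolding triangle_Suc by (simp add: power_add)
  have "pqBS q n (Suc k) x * qint_recip q (Suc k) =
      (qbinom q (Suc m + k) (Suc k) * qint q (Suc k)) * q ^ (k * (k - 1) div 2) * x * x ^ k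
        / qpoch q x (Suc m + Suc k)"
    unfolding pqBS_def n idx tri qint_recip_Suc using q_pos by (simp add: field_simps)
  also have "\<dots> = qint q n * x * pqBS q (Suc n) k x"
    unfolding qbinom_absorb pqBS_def n idx by (simp add: field_simps)
  finally show ?thesis .
qed

lemma pqBS_Suc_rec:
  assumes "0 < n"
  shows "pqBS q (Suc n) (Suc k) x * (1 + q ^ (n + Suc k) * x)
    = pqBS q n (Suc k) x + q ^ (n + k) * x * pqBS q (Suc n) k x"
proof -
  obtain m where n: "n = Suc m" using assms by (cases n) auto
  have idx: "Suc m + Suc k - 1 = Suc m + k" "Suc (Suc m) + k - 1 = Suc m + k"
     "Suc (Suc m) + k = Suc m + Suc k" "Suc (Suc m) + Suc k - 1 = Suc m + Suc k"
     "Suc (Suc m) + Suc k = Suc (Suc m + Suc k)" by simp_all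
  have tri: "q ^ (Suc k * (Suc k - 1) div 2) = q ^ (k * (k - 1) div 2) * q ^ k"
    unfolding triangle_Suc by (simp add: power_add)
  define B1 where "B1 = qbinom q (Suc m + k) (Suc k)"
  define B0 where "B0 = qbinom q (Suc m + k) k"
  define T where "T = q ^ (k * (k - 1) div 2)"
  define P where "P = qpoch q x (Suc m + Suc k)"
  define c where "c = 1 + q ^ (Suc m + Suc k) * x"
  have "0 \<le> q ^ (Suc m + Suc k) * x" using q_pos x_nonneg by simp
  then have nz: "P \<noteq> 0" "c \<noteq> 0"
    using qpoch_pos[OF x_nonneg, of "Suc m + Suc k"] unfolding P_def c_def by auto
  have lhs: "pqBS q (Suc n) (Suc k) x = (B1 + q ^ Suc m * B0) * (T * q ^ k) * (x * x ^ k) / (P * c)"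
    using qbinom_pascal[of m k]
    unfolding pqBS_def n idx tri qpoch_Suc B1_def B0_def T_def P_def c_def by simp
  have rhs1: "pqBS q n (Suc k) x = B1 * (T * q ^ k) * (x * x ^ k) / P"
    unfolding pqBS_def n idx tri B1_def T_def P_def by simp
  have rhs2: "pqBS q (Suc n) k x = B0 * T * x ^ k / P"
    unfolding pqBS_def n idx B0_def T_def P_def by simp
  have "1 + q ^ (n + Suc k) * x = c" unfolding c_def n ..
  moreover have "q ^ (n + k) = q ^ Suc m * q ^ k" unfolding n by (simp add: power_add)
  ultimately show ?thesis
    unfolding lhs rhs1 rhs2 using nz by (simp add: field_simps)
qed

lemma pqBS_0_rec: "pqBS q n 0 x = pqBS q (Suc n) 0 x * (1 + q ^ n * x)"
proof -
  have "0 < qpoch q x n" "0 < 1 + q ^ n * x"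
    using qpoch_pos[OF x_nonneg] q_pos x_nonneg by (auto intro: add_pos_nonneg)
  then show ?thesis unfolding pqBS_def qbinom_0 using qpoch_Suc[of x n] by simp
qed

lemma pqBS_1_sums: "(\<lambda>k. pqBS q 1 k x) sums 1"
proof -
  define b where "b k = q ^ (k * (k - 1) div 2) * x ^ k / qpoch q x k" for k
  define r where "r = x / (1 + x)"
  have r: "0 \<le> r" "r < 1" unfolding r_def using x_nonneg by auto
  have ratio_pos: "0 < 1 + q ^ k * x" for k
    using q_pos x_nonneg by (intro add_pos_nonneg) auto
  have b_Suc: "b (Suc k) = b k * (q ^ k * x / (1 + q ^ k * x))" for k
    unfolding b_def triangle_Suc qpoch_Suc using qpoch_pos[OF x_nonneg, of k] ratio_pos[of k]
    by (simp add: power_add field_simps)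
  have ratio: "0 \<le> q ^ k * x / (1 + q ^ k * x)" "q ^ k * x / (1 + q ^ k * x) \<le> r" for k
  proof -
    have "q ^ k * x \<le> 1 * x" using q_power_le_1[of k] x_nonneg by (rule mult_right_mono)
    moreover have "0 \<le> q ^ k * x" using q_pos x_nonneg by simp
    ultimately show "0 \<le> q ^ k * x / (1 + q ^ k * x)" "q ^ k * x / (1 + q ^ k * x) \<le> r"
      using x_nonneg unfolding r_def by (auto simp: divide_simps algebra_simps)
  qed
  have b_bounds: "0 \<le> b k \<and> b k \<le> r ^ k" for k
  proof (induction k)
    case 0
    then show ?case by (simp add: b_def qpoch_def)
  next
    case (Suc k)
    have "b k * (q ^ k * x / (1 + q ^ k * x)) \<le> r ^ k * r"
      using Suc ratio[of k] r by (intro mult_mono) auto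
    moreover have "0 \<le> b k * (q ^ k * x / (1 + q ^ k * x))"
      using Suc ratio[of k] by (intro mult_nonneg_nonneg) auto
    ultimately show ?case unfolding b_Suc by (simp add: mult.commute)
  qed
  have "b \<longlonglongrightarrow> 0"
  proof (rule Lim_null_comparison)
    show "\<forall>\<^sub>F k in sequentially. norm (b k) \<le> r ^ k" using b_bounds by simp
    show "(\<lambda>k. r ^ k) \<longlonglongrightarrow> 0" using r by (intro LIMSEQ_power_zero) simp
  qed
  then have "(\<lambda>k. b k - b (Suc k)) sums (b 0 - 0)" by (rule telescope_sums')
  moreover have "b k - b (Suc k) = pqBS q 1 k x" for k
  proof -
    have "pqBS q 1 k x = b k / (1 + q ^ k * x)"
      unfolding pqBS_def b_def using qbinom_diag[of k] qpoch_Suc[of x k] by simp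
    also have "\<dots> = b k - b k * (q ^ k * x / (1 + q ^ k * x))"
      using ratio_pos[of k] by (simp add: field_simps)
    finally show ?thesis unfolding b_Suc by simp
  qed
  moreover have "b 0 = 1" by (simp add: b_def qpoch_def)
  ultimately show ?thesis by simp
qed

lemma pqBS_partial_sum_Suc:
  assumes "0 < n"
  shows "(\<Sum>k<Suc K. pqBS q n k x) = (\<Sum>k<Suc K. pqBS q (Suc n) k x) + q ^ (n + K) * x * pqBS q (Suc n) K x"
proof (induction K)
  case 0
  then show ?case using pqBS_0_rec[of n] by (simp add: algebra_simps)
next
  case (Suc K)
  then show ?case using pqBS_Suc_rec[OF assms, of K] by (simp add: algebra_simps)
qed

text \<open>Raising n by one changes the partial sums by a nonnegative term dominated by a term of
  the new series; it is bounded, hence convergent, so this defect vanishes in the limit.\<close>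

lemma pqBS_sums_Suc:
  assumes n: "0 < n" and sums_n: "(\<lambda>k. pqBS q n k x) sums 1"
  shows "(\<lambda>k. pqBS q (Suc n) k x) sums 1"
proof -
  define D where "D k = q ^ (n + k) * x * pqBS q (Suc n) k x" for k
  have D_nonneg: "0 \<le> D k" for k unfolding D_def using q_pos x_nonneg pqBS_nonneg by simp
  have "(\<Sum>k<K. pqBS q (Suc n) k x) \<le> 1" for K
  proof (cases K)
    case (Suc K')
    have "(\<Sum>k<Suc K'. pqBS q (Suc n) k x) \<le> (\<Sum>k<Suc K'. pqBS q n k x)"
      using pqBS_partial_sum_Suc[OF n, of K'] D_nonneg[of K'] by (simp add: D_def)
    also have "\<dots> \<le> (\<Sum>k. pqBS q n k x)"
      using sums_n pqBS_nonneg by (intro sum_le_suminf) (auto simp: sums_iff)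
    also have "\<dots> = 1" using sums_n by (simp add: sums_iff)
    finally show ?thesis using Suc by simp
  qed simp
  then have summable: "summable (\<lambda>k. pqBS q (Suc n) k x)"
    using pqBS_nonneg by (intro summableI_nonneg_bounded) auto
  have "D \<longlonglongrightarrow> 0"
  proof (rule Lim_null_comparison)
    have "D k \<le> x * pqBS q (Suc n) k x" for k
      using mult_right_mono[OF q_power_le_1[of "n + k"], of "x * pqBS q (Suc n) k x"]
        x_nonneg pqBS_nonneg unfolding D_def by (simp add: mult.assoc)
    then show "\<forall>\<^sub>F k in sequentially. norm (D k) \<le> x * pqBS q (Suc n) k x"
      using D_nonneg by simp
    show "(\<lambda>k. x * pqBS q (Suc n) k x) \<longlonglongrightarrow> 0"
      using tendsto_mult_right_zero[OF summable_LIMSEQ_zero[OF summable]] by simp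
  qed
  moreover have "(\<lambda>K. \<Sum>k<Suc K. pqBS q n k x) \<longlonglongrightarrow> 1"
    using LIMSEQ_Suc[OF sums_n[unfolded sums_def]] .
  ultimately have "(\<lambda>K. (\<Sum>k<Suc K. pqBS q n k x) - D K) \<longlonglongrightarrow> 1 - 0"
    by (intro tendsto_diff)
  then have "(\<lambda>K. \<Sum>k<Suc K. pqBS q (Suc n) k x) \<longlonglongrightarrow> 1"
    using pqBS_partial_sum_Suc[OF n] by (simp add: D_def)
  then have "(\<lambda>K. \<Sum>k<K. pqBS q (Suc n) k x) \<longlonglongrightarrow> 1"
    by (rule LIMSEQ_imp_Suc)
  then show ?thesis unfolding sums_def .
qed

lemma pqBS_sums_1: "0 < n \<Longrightarrow> (\<lambda>k. pqBS q n k x) sums 1"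
proof (induction n rule: nat_induct_non_zero)
  case 1
  then show ?case by (rule pqBS_1_sums)
next
  case (Suc n)
  then show ?case by (rule pqBS_sums_Suc)
qed

lemma pqBS_mean_sums:
  assumes n: "0 < n"
  shows "(\<lambda>k. pqBS q n k x * qint_recip q k) sums (qint q n * x)"
proof -
  have "(\<lambda>k. qint q n * x * pqBS q (Suc n) k x) sums (qint q n * x * 1)"
    by (intro sums_mult pqBS_sums_1) simp
  then have "(\<lambda>k. pqBS q n (Suc k) x * qint_recip q (Suc k)) sums (qint q n * x)"
    using pqBS_absorb[OF n] by simp
  then show ?thesis
    using sums_Suc_iff[of "\<lambda>k. pqBS q n k x * qint_recip q k"] qint_recip_0 by simp
qed

lemma pqBS_square_mean_sums:
  assumes n: "0 < n"
  shows "(\<lambda>k. pqBS q n k x * qint_recip q k ^ 2) sums (qint q n * x * (1 + qint q (Suc n) * x / q))"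
proof -
  have "(\<lambda>k. qint q n * x * (pqBS q (Suc n) k x + pqBS q (Suc n) k x * qint_recip q k / q))
      sums (qint q n * x * (1 + qint q (Suc n) * x / q))"
    by (intro sums_mult sums_add sums_divide pqBS_sums_1 pqBS_mean_sums) simp_all
  moreover have "qint q n * x * (pqBS q (Suc n) k x + pqBS q (Suc n) k x * qint_recip q k / q)
      = pqBS q n (Suc k) x * qint_recip q (Suc k) ^ 2" for k
  proof -
    have "pqBS q n (Suc k) x * qint_recip q (Suc k) ^ 2
        = qint q n * x * pqBS q (Suc n) k x * qint_recip q (Suc k)"
      by (simp only: power2_eq_square mult.assoc[symmetric] pqBS_absorb[OF n])
    then show ?thesis unfolding qint_recip_Suc_rec by (simp add: algebra_simps)
  qed
  ultimately have "(\<lambda>k. pqBS q n (Suc k) x * qint_recip q (Suc k) ^ 2)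
      sums (qint q n * x * (1 + qint q (Suc n) * x / q))"
    by simp
  then show ?thesis
    using sums_Suc_iff[of "\<lambda>k. pqBS q n k x * qint_recip q k ^ 2"] qint_recip_0 by simp
qed

end

end


definition szasz_weight :: "real \<Rightarrow> nat \<Rightarrow> nat \<Rightarrow> nat \<Rightarrow> real" where
  "szasz_weight q n k j = qint q n * ((1 - q) * (q / (1 - q ^ n))) *
     ((1 / q ^ (k + 1)) * sqBS q n k (q / (1 - q ^ n) * q ^ j) * q ^ j)"

definition szasz_node :: "real \<Rightarrow> nat \<Rightarrow> nat \<Rightarrow> nat \<Rightarrow> real" where
  "szasz_node q n k j = qint q n * (q / (1 - q ^ n) * q ^ j) / q ^ k"

context qparam
begin

context
  fixes n :: nat
  assumes n_pos: "0 < n"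
begin

lemma qint_mult_jackson_node: "qint q n * (q / (1 - q ^ n) * q ^ j) = q ^ Suc j / (1 - q)"
proof -
  have "a \<noteq> 0 \<Longrightarrow> (a / b) * (q / a * q ^ j) = q * q ^ j / b" for a b :: real
    by (simp add: field_simps)
  then show ?thesis using q_power_less_1[OF n_pos] unfolding qint_def by simp
qed

lemma qint_mult_jackson_step: "qint q n * ((1 - q) * (q / (1 - q ^ n))) = q"
proof -
  have "a \<noteq> 0 \<Longrightarrow> b \<noteq> 0 \<Longrightarrow> (a / b) * (b * (q / a)) = q" for a b :: real
    by (simp add: field_simps)
  then show ?thesis using q_power_less_1[OF n_pos] q_less_1 unfolding qint_def by simp
qed

lemma szasz_node_eq: "szasz_node q n k j = q ^ Suc j / ((1 - q) * q ^ k)"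
  unfolding szasz_node_def qint_mult_jackson_node by simp

lemma szasz_node_nonneg: "0 \<le> szasz_node q n k j"
  unfolding szasz_node_eq using q_pos q_less_1 by simp

lemma szasz_weight_eq:
  "szasz_weight q n k j = q ^ (j * Suc k) * qexp_node q (Suc j) / jackson_gamma q (Suc k)"
proof -
  define X where "X = q ^ Suc j / (1 - q)"
  have basis: "sqBS q n k (q / (1 - q ^ n) * q ^ j) = qexp_node q (Suc j) * X ^ k / qfact q k"
  proof -
    have "- qint q n * (q / (1 - q ^ n) * q ^ j) = -(q ^ Suc j / (1 - q))"
      using qint_mult_jackson_node[of j] by simp
    then show ?thesis unfolding sqBS_def qexp_node_def X_def qint_mult_jackson_node by simp
  qed
  have Xk: "X ^ k = q ^ (Suc j * k) / (1 - q) ^ k"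
    unfolding X_def by (simp only: power_divide power_mult)
  have exponent: "q * q ^ (Suc j * k) * q ^ j = q ^ (j * Suc k) * q ^ (k + 1)"
  proof -
    have "q * q ^ (Suc j * k) * q ^ j = q ^ (1 + Suc j * k + j)" by (simp add: power_add)
    also have "1 + Suc j * k + j = j * Suc k + (k + 1)" by (simp add: algebra_simps)
    finally show ?thesis by (simp add: power_add)
  qed
  have "szasz_weight q n k j
      = q * ((1 / q ^ (k + 1)) * (qexp_node q (Suc j) * X ^ k / qfact q k) * q ^ j)"
    unfolding szasz_weight_def qint_mult_jackson_step basis ..
  also have "\<dots> = (q * q ^ (Suc j * k) * q ^ j) * qexp_node q (Suc j)
      / (q ^ (k + 1) * (qfact q k * (1 - q) ^ k))"
    unfolding Xk by (simp add: mult_ac)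
  also have "\<dots> = q ^ (j * Suc k) * qexp_node q (Suc j) / (qfact q k * (1 - q) ^ k)"
    unfolding exponent using q_pos by simp
  finally show ?thesis using jackson_gamma_qfact[of k] by simp
qed

lemma szasz_weight_nonneg: "0 \<le> szasz_weight q n k j"
  unfolding szasz_weight_eq using q_pos qexp_node_nonneg[of j] jackson_gamma_pos[of k] by simp

lemma szasz_weight_moment_sums:
  "(\<lambda>j. szasz_weight q n k j * szasz_node q n k j ^ m) sums
     (q ^ m / ((1 - q) ^ m * q ^ (k * m)) * jackson_gamma q (Suc k + m) / jackson_gamma q (Suc k))"
proof -
  define c where "c = q ^ m / ((1 - q) ^ m * q ^ (k * m) * jackson_gamma q (Suc k))"
  have "szasz_weight q n k j * szasz_node q n k j ^ m
      = c * (q ^ (j * (Suc k + m)) * qexp_node q (Suc j))" for j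
  proof -
    have "q ^ (j * Suc k) * q ^ (Suc j * m) = q ^ m * q ^ (j * (Suc k + m))"
      by (simp add: power_add[symmetric] algebra_simps)
    moreover have "szasz_node q n k j ^ m = q ^ (Suc j * m) / ((1 - q) ^ m * q ^ (k * m))"
      unfolding szasz_node_eq by (simp only: power_divide power_mult_distrib power_mult)
    ultimately show ?thesis
      unfolding szasz_weight_eq c_def by (simp add: mult_ac)
  qed
  moreover have "(\<lambda>j. c * (q ^ (j * (Suc k + m)) * qexp_node q (Suc j))) sums (c * jackson_gamma q (Suc k + m))"
    by (intro sums_mult jackson_gamma_sums) simp
  ultimately show ?thesis unfolding c_def by simp
qed

lemma szasz_weight_sums_1: "(\<lambda>j. szasz_weight q n k j) sums 1"
  using szasz_weight_moment_sums[of k 0] jackson_gamma_pos[of k] by simp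

lemma szasz_weight_mean_sums:
  "(\<lambda>j. szasz_weight q n k j * szasz_node q n k j) sums (q + qint_recip q k)"
proof -
  have "jackson_gamma q (Suc k + 1) = (1 - q ^ Suc k) * jackson_gamma q (Suc k)"
    using jackson_gamma_Suc[of "Suc k"] by simp
  then have "q ^ 1 / ((1 - q) ^ 1 * q ^ (k * 1)) * jackson_gamma q (Suc k + 1) / jackson_gamma q (Suc k)
      = q * qint q (Suc k) / q ^ k"
    using jackson_gamma_pos[of k] by (simp add: qint_def)
  also have "\<dots> = q + qint_recip q k"
    unfolding qint_recip_def qint_Suc using q_pos by (simp add: field_simps)
  finally show ?thesis using szasz_weight_moment_sums[of k 1] by simp
qed

lemma szasz_weight_square_mean_sums:
  "(\<lambda>j. szasz_weight q n k j * szasz_node q n k j ^ 2)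
     sums ((q + qint_recip q k) * (q + q ^ 2 + qint_recip q k))"
proof -
  have "jackson_gamma q (Suc k + 2)
      = (1 - q ^ Suc (Suc k)) * ((1 - q ^ Suc k) * jackson_gamma q (Suc k))"
    using jackson_gamma_Suc[of "Suc (Suc k)"] jackson_gamma_Suc[of "Suc k"] by simp
  then have "q ^ 2 / ((1 - q) ^ 2 * q ^ (k * 2)) * jackson_gamma q (Suc k + 2) / jackson_gamma q (Suc k)
      = (q * qint q (Suc k) / q ^ k) * (q * qint q (Suc (Suc k)) / q ^ k)"
    using jackson_gamma_pos[of k] by (simp add: qint_def power2_eq_square power_mult mult_ac)
  also have "\<dots> = (q + qint_recip q k) * (q + q ^ 2 + qint_recip q k)"
    unfolding qint_recip_def qint_Suc using q_pos by (simp add: field_simps power2_eq_square)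
  finally show ?thesis using szasz_weight_moment_sums[of k 2] by simp
qed

end

end


definition stancu_node :: "real \<Rightarrow> real \<Rightarrow> real \<Rightarrow> nat \<Rightarrow> nat \<Rightarrow> nat \<Rightarrow> real" where
  "stancu_node \<alpha> \<beta> q n k j = (szasz_node q n k j + \<alpha>) / (qint q n + \<beta>)"

text \<open>The operator applied to (t - x)^2, in the form produced by the moment computations.\<close>

definition bss_second_moment :: "real \<Rightarrow> real \<Rightarrow> real \<Rightarrow> nat \<Rightarrow> real \<Rightarrow> real" where
  "bss_second_moment \<alpha> \<beta> q n x = (let N = qint q n; c = N + \<beta>; d = \<alpha> / c - x in
     (N * x * (1 + qint q (Suc n) * x / q) + (2 * q + q ^ 2) * (N * x) + (q ^ 2 + q ^ 3)) / c ^ 2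
     + 2 * d * (q + N * x) / c + d ^ 2)"

context qparam
begin

context
  fixes n :: nat and \<alpha> \<beta> :: real
  assumes n_pos: "0 < n" and alpha_nonneg: "0 \<le> \<alpha>" and beta_nonneg: "0 \<le> \<beta>"
begin

lemma stancu_denom_pos: "0 < qint q n + \<beta>"
  using qint_pos[OF n_pos] beta_nonneg by simp

lemma stancu_node_nonneg: "0 \<le> stancu_node \<alpha> \<beta> q n k j"
  unfolding stancu_node_def
  using szasz_node_nonneg[OF n_pos] alpha_nonneg stancu_denom_pos by simp

lemma stancu_sq_dev_sums:
  fixes x :: real
  defines "c \<equiv> qint q n + \<beta>" and "d \<equiv> \<alpha> / (qint q n + \<beta>) - x"
  shows "(\<lambda>j. szasz_weight q n k j * (stancu_node \<alpha> \<beta> q n k j - x) ^ 2) sums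
    ((q + qint_recip q k) * (q + q ^ 2 + qint_recip q k) / c ^ 2 + 2 * d * (q + qint_recip q k) / c + d ^ 2)"
proof -
  have "c \<noteq> 0" using stancu_denom_pos unfolding c_def by simp
  have expand: "szasz_weight q n k j * (stancu_node \<alpha> \<beta> q n k j - x) ^ 2 =
      (1 / c ^ 2) * (szasz_weight q n k j * szasz_node q n k j ^ 2)
      + (2 * d / c) * (szasz_weight q n k j * szasz_node q n k j) + d ^ 2 * szasz_weight q n k j" for j
  proof -
    have dev: "stancu_node \<alpha> \<beta> q n k j - x = szasz_node q n k j / c + d"
      unfolding stancu_node_def c_def d_def by (simp add: add_divide_distrib)
    show ?thesis unfolding dev using \<open>c \<noteq> 0\<close> by (simp add: field_simps power2_eq_square)
  qed
  have "(\<lambda>j. (1 / c ^ 2) * (szasz_weight q n k j * szasz_node q n k j ^ 2)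
      + (2 * d / c) * (szasz_weight q n k j * szasz_node q n k j) + d ^ 2 * szasz_weight q n k j) sums
      ((1 / c ^ 2) * ((q + qint_recip q k) * (q + q ^ 2 + qint_recip q k))
       + (2 * d / c) * (q + qint_recip q k) + d ^ 2 * 1)"
    by (intro sums_add sums_mult szasz_weight_square_mean_sums[OF n_pos]
        szasz_weight_mean_sums[OF n_pos] szasz_weight_sums_1[OF n_pos])
  then show ?thesis unfolding expand by simp
qed

lemma bss_second_moment_sums:
  assumes x_nonneg: "0 \<le> x"
  shows "(\<lambda>k. pqBS q n k x * (\<Sum>j. szasz_weight q n k j * (stancu_node \<alpha> \<beta> q n k j - x) ^ 2))
    sums bss_second_moment \<alpha> \<beta> q n x"
proof -
  define N where "N = qint q n"
  define c where "c = N + \<beta>"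
  define d where "d = \<alpha> / c - x"
  have "c \<noteq> 0" using stancu_denom_pos unfolding c_def N_def by simp
  have inner: "(\<Sum>j. szasz_weight q n k j * (stancu_node \<alpha> \<beta> q n k j - x) ^ 2)
      = (1 / c ^ 2) * qint_recip q k ^ 2 + ((2 * q + q ^ 2) / c ^ 2 + 2 * d / c) * qint_recip q k
        + ((q ^ 2 + q ^ 3) / c ^ 2 + 2 * d * q / c + d ^ 2)" for k
  proof -
    have "(\<Sum>j. szasz_weight q n k j * (stancu_node \<alpha> \<beta> q n k j - x) ^ 2)
        = (q + qint_recip q k) * (q + q ^ 2 + qint_recip q k) / c ^ 2
          + 2 * d * (q + qint_recip q k) / c + d ^ 2"
      unfolding d_def c_def N_def by (rule sums_unique[OF stancu_sq_dev_sums, symmetric])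
    also have "\<dots> = (1 / c ^ 2) * qint_recip q k ^ 2 + ((2 * q + q ^ 2) / c ^ 2 + 2 * d / c) * qint_recip q k
        + ((q ^ 2 + q ^ 3) / c ^ 2 + 2 * d * q / c + d ^ 2)"
      using \<open>c \<noteq> 0\<close> by (simp add: field_simps power2_eq_square power3_eq_cube)
    finally show ?thesis .
  qed
  have "(\<lambda>k. (1 / c ^ 2) * (pqBS q n k x * qint_recip q k ^ 2)
      + ((2 * q + q ^ 2) / c ^ 2 + 2 * d / c) * (pqBS q n k x * qint_recip q k)
      + ((q ^ 2 + q ^ 3) / c ^ 2 + 2 * d * q / c + d ^ 2) * pqBS q n k x) sums
      ((1 / c ^ 2) * (N * x * (1 + qint q (Suc n) * x / q))
      + ((2 * q + q ^ 2) / c ^ 2 + 2 * d / c) * (N * x)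
      + ((q ^ 2 + q ^ 3) / c ^ 2 + 2 * d * q / c + d ^ 2) * 1)"
    unfolding N_def
    by (intro sums_add sums_mult pqBS_square_mean_sums[OF x_nonneg n_pos]
        pqBS_mean_sums[OF x_nonneg n_pos] pqBS_sums_1[OF x_nonneg n_pos])
  moreover have "(1 / c ^ 2) * (N * x * (1 + qint q (Suc n) * x / q))
      + ((2 * q + q ^ 2) / c ^ 2 + 2 * d / c) * (N * x)
      + ((q ^ 2 + q ^ 3) / c ^ 2 + 2 * d * q / c + d ^ 2) * 1
      = bss_second_moment \<alpha> \<beta> q n x"
    unfolding bss_second_moment_def Let_def N_def[symmetric] c_def[symmetric] d_def[symmetric]
    using \<open>c \<noteq> 0\<close> by (simp add: field_simps power2_eq_square)
  ultimately show ?thesis unfolding inner by (simp add: algebra_simps)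
qed

lemma bss_second_moment_poly:
  "bss_second_moment \<alpha> \<beta> q n x =
    (let N = qint q n; c = N + \<beta> in
      x ^ 2 * (\<beta> ^ 2 / c ^ 2 + N / (q * c ^ 2))
      + x * (((1 + q ^ 2) * N - 2 * q * \<beta> - 2 * \<alpha> * \<beta>) / c ^ 2)
      + (q ^ 2 + q ^ 3 + 2 * \<alpha> * q + \<alpha> ^ 2) / c ^ 2)"
proof -
  define c where "c = qint q n + \<beta>"
  have "c \<noteq> 0" using stancu_denom_pos unfolding c_def by simp
  have N: "qint q n = c - \<beta>" unfolding c_def by simp
  show ?thesis
    unfolding bss_second_moment_def Let_def qint_Suc_left c_def[symmetric] N
    using q_pos \<open>c \<noteq> 0\<close> by (simp add: field_simps power2_eq_square power3_eq_cube)
qed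

lemma bss_second_moment_le_quadratic:
  assumes x_nonneg: "0 \<le> x" and q_ge: "1/2 \<le> q"
  shows "bss_second_moment \<alpha> \<beta> q n x
    \<le> ((\<beta> ^ 2 + 2) * x ^ 2 + 2 * x + (2 + 2 * \<alpha> + \<alpha> ^ 2)) / qint q n"
proof -
  define N where "N = qint q n"
  define c where "c = N + \<beta>"
  have N_ge_1: "1 \<le> N" unfolding N_def using qint_ge_1 n_pos by simp
  have N_le_c: "N \<le> c" unfolding c_def using beta_nonneg by simp
  have NN_le_cc: "N * N \<le> c ^ 2" using N_ge_1 N_le_c by (simp add: power2_eq_square mult_mono)
  have N_le_cc: "N \<le> c ^ 2" using NN_le_cc N_ge_1 by (smt (verit) mult_le_cancel_left1)
  have cc_pos: "0 < c ^ 2" using N_ge_1 N_le_c by simp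
  have inverse_le: "1 / c ^ 2 \<le> 1 / N"
    using N_le_cc N_ge_1 cc_pos by (intro divide_left_mono) auto
  have quadratic_coeff: "\<beta> ^ 2 / c ^ 2 + N / (q * c ^ 2) \<le> (\<beta> ^ 2 + 2) / N"
  proof -
    have "\<beta> ^ 2 / c ^ 2 \<le> \<beta> ^ 2 / N"
      using inverse_le by (simp add: divide_inverse mult_left_mono)
    moreover have "N / (q * c ^ 2) \<le> N / (q * (N * N))"
      using NN_le_cc N_ge_1 q_pos cc_pos by (intro divide_left_mono mult_left_mono) auto
    moreover have "N / (q * (N * N)) \<le> 2 / N"
      using q_ge N_ge_1 by (simp add: field_simps)
    ultimately show ?thesis by (simp add: add_divide_distrib)
  qed
  have linear_coeff: "((1 + q ^ 2) * N - 2 * q * \<beta> - 2 * \<alpha> * \<beta>) / c ^ 2 \<le> 2 / N"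
  proof -
    have "(1 + q ^ 2) * N \<le> 2 * N" using q_power_le_1[of 2] N_ge_1 by (intro mult_right_mono) auto
    moreover have "0 \<le> 2 * q * \<beta>" "0 \<le> 2 * \<alpha> * \<beta>" using q_pos alpha_nonneg beta_nonneg by auto
    ultimately have "(1 + q ^ 2) * N - 2 * q * \<beta> - 2 * \<alpha> * \<beta> \<le> 2 * N" by linarith
    then have "((1 + q ^ 2) * N - 2 * q * \<beta> - 2 * \<alpha> * \<beta>) / c ^ 2 \<le> 2 * N / c ^ 2"
      using cc_pos by (intro divide_right_mono) auto
    also have "\<dots> \<le> 2 * N / (N * N)" using NN_le_cc N_ge_1 cc_pos by (intro divide_left_mono) auto
    also have "\<dots> = 2 / N" using N_ge_1 by simp
    finally show ?thesis .
  qed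
  have constant_coeff: "(q ^ 2 + q ^ 3 + 2 * \<alpha> * q + \<alpha> ^ 2) / c ^ 2 \<le> (2 + 2 * \<alpha> + \<alpha> ^ 2) / N"
  proof -
    have "\<alpha> * q \<le> \<alpha>" using alpha_nonneg q_less_1 by (simp add: mult_left_le)
    then have "q ^ 2 + q ^ 3 + 2 * \<alpha> * q + \<alpha> ^ 2 \<le> 2 + 2 * \<alpha> + \<alpha> ^ 2"
      using q_power_le_1[of 2] q_power_le_1[of 3] by linarith
    then have "(q ^ 2 + q ^ 3 + 2 * \<alpha> * q + \<alpha> ^ 2) / c ^ 2 \<le> (2 + 2 * \<alpha> + \<alpha> ^ 2) / c ^ 2"
      using cc_pos by (intro divide_right_mono) auto
    also have "\<dots> \<le> (2 + 2 * \<alpha> + \<alpha> ^ 2) / N"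
      using N_le_cc N_ge_1 cc_pos alpha_nonneg by (intro divide_left_mono) auto
    finally show ?thesis .
  qed
  have "bss_second_moment \<alpha> \<beta> q n x
      \<le> x ^ 2 * ((\<beta> ^ 2 + 2) / N) + x * (2 / N) + (2 + 2 * \<alpha> + \<alpha> ^ 2) / N"
    unfolding bss_second_moment_poly Let_def N_def[symmetric] c_def[symmetric]
    using quadratic_coeff linear_coeff constant_coeff x_nonneg by (intro add_mono mult_left_mono) auto
  also have "\<dots> = ((\<beta> ^ 2 + 2) * x ^ 2 + 2 * x + (2 + 2 * \<alpha> + \<alpha> ^ 2)) / N"
    using N_ge_1 by (simp add: field_simps)
  finally show ?thesis unfolding N_def .
qed

lemma bss_second_moment_le:
  assumes x_nonneg: "0 \<le> x" and q_ge: "1/2 \<le> q"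
  shows "bss_second_moment \<alpha> \<beta> q n x \<le> (6 + 2 * \<alpha> + \<alpha> ^ 2 + \<beta> ^ 2) * (1 + x ^ 2) / qint q n"
proof -
  note bss_second_moment_le_quadratic[OF x_nonneg q_ge]
  also have "((\<beta> ^ 2 + 2) * x ^ 2 + 2 * x + (2 + 2 * \<alpha> + \<alpha> ^ 2)) / qint q n
      \<le> (6 + 2 * \<alpha> + \<alpha> ^ 2 + \<beta> ^ 2) * (1 + x ^ 2) / qint q n"
  proof (rule divide_right_mono)
    have "2 * x \<le> 1 + x ^ 2" using sum_squares_ge_zero[of "x - 1" 0] by (simp add: power2_eq_square algebra_simps)
    moreover have "0 \<le> \<alpha> * x ^ 2" "0 \<le> \<alpha> ^ 2 * x ^ 2" "0 \<le> x ^ 2" "0 \<le> \<beta> ^ 2"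
      using alpha_nonneg by auto
    moreover have "(6 + 2 * \<alpha> + \<alpha> ^ 2 + \<beta> ^ 2) * (1 + x ^ 2)
        = (\<beta> ^ 2 + 2) * x ^ 2 + (2 + 2 * \<alpha> + \<alpha> ^ 2) + 4 * x ^ 2
          + 2 * (\<alpha> * x ^ 2) + \<alpha> ^ 2 * x ^ 2 + 4 + \<beta> ^ 2"
      by (simp add: algebra_simps)
    ultimately show "(\<beta> ^ 2 + 2) * x ^ 2 + 2 * x + (2 + 2 * \<alpha> + \<alpha> ^ 2)
        \<le> (6 + 2 * \<alpha> + \<alpha> ^ 2 + \<beta> ^ 2) * (1 + x ^ 2)"
      by linarith
  qed (use qint_pos[OF n_pos] in simp)
  finally show ?thesis .
qed

context
  fixes f :: "real \<Rightarrow> real" and M :: real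
  assumes f_bounded: "\<And>y. 0 \<le> y \<Longrightarrow> \<bar>f y\<bar> \<le> M"
begin

lemma szasz_f_summable: "summable (\<lambda>j. szasz_weight q n k j * f (stancu_node \<alpha> \<beta> q n k j))"
  using szasz_weight_sums_1[OF n_pos] szasz_weight_nonneg[OF n_pos] f_bounded[OF stancu_node_nonneg]
  by (intro summable_weighted_bounded) (auto simp: sums_iff)

lemma szasz_f_mean_bounded: "\<bar>\<Sum>j. szasz_weight q n k j * f (stancu_node \<alpha> \<beta> q n k j)\<bar> \<le> M"
proof -
  have "\<bar>szasz_weight q n k j * f (stancu_node \<alpha> \<beta> q n k j)\<bar> \<le> M * szasz_weight q n k j" for j
    using mult_left_mono[OF f_bounded[OF stancu_node_nonneg] szasz_weight_nonneg[OF n_pos]]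
      szasz_weight_nonneg[OF n_pos, of k j]
    by (simp add: abs_mult mult.commute)
  then have "\<bar>\<Sum>j. szasz_weight q n k j * f (stancu_node \<alpha> \<beta> q n k j)\<bar> \<le> M * 1"
    using summable_sums[OF szasz_f_summable] sums_mult[OF szasz_weight_sums_1[OF n_pos]]
    by (rule sums_abs_le)
  then show ?thesis by simp
qed

lemma BSS_op_eq:
  assumes x_nonneg: "0 \<le> x"
  shows "BSS_op \<alpha> \<beta> n q f x
    = (\<Sum>k. pqBS q n k x * (\<Sum>j. szasz_weight q n k j * f (stancu_node \<alpha> \<beta> q n k j)))"
proof -
  define G where "G k = (\<Sum>j. szasz_weight q n k j * f (stancu_node \<alpha> \<beta> q n k j))" for k
  define T where "T k j = (1 / q ^ (k + 1)) * sqBS q n k (q / (1 - q ^ n) * q ^ j)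
      * f (stancu_node \<alpha> \<beta> q n k j) * q ^ j" for k j
  have N_nz: "qint q n \<noteq> 0" using qint_pos[OF n_pos] by simp
  have "(\<lambda>j. szasz_weight q n k j * f (stancu_node \<alpha> \<beta> q n k j) / q) sums (G k / q)" for k
    unfolding G_def by (intro sums_divide summable_sums szasz_f_summable)
  moreover have "szasz_weight q n k j * f (stancu_node \<alpha> \<beta> q n k j) = q * T k j" for k j
    unfolding szasz_weight_def T_def qint_mult_jackson_step[OF n_pos] by (simp add: mult_ac)
  ultimately have "(\<lambda>j. T k j) sums (G k / q)" for k
    using q_pos by simp
  then have "(\<Sum>j. T k j) = G k / q" for k
    by (simp add: sums_iff)
  moreover have "(1 - q) * (q / (1 - q ^ n)) = q / qint q n"
    using qint_mult_jackson_step[OF n_pos] N_nz by (simp add: field_simps)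
  ultimately have inner: "(1 - q) * (q / (1 - q ^ n)) * (\<Sum>j. T k j) = G k / qint q n" for k
    using q_pos by simp
  have "summable (\<lambda>k. pqBS q n k x * G k)"
    using pqBS_sums_1[OF x_nonneg n_pos] pqBS_nonneg[OF x_nonneg] szasz_f_mean_bounded
    unfolding G_def by (intro summable_weighted_bounded) (auto simp: sums_iff)
  then have "(\<Sum>k. pqBS q n k x * G k / qint q n) = (\<Sum>k. pqBS q n k x * G k) / qint q n"
    by (rule suminf_divide)
  then show ?thesis
    unfolding BSS_op_def qjackson_def T_def[symmetric] stancu_node_def[symmetric]
      szasz_node_def[symmetric]
    unfolding inner G_def[symmetric] using N_nz by simp
qed

lemma BSS_op_dev_le:
  assumes x_nonneg: "0 \<le> x" and "0 \<le> L"
    and f_dev: "\<And>y. 0 \<le> y \<Longrightarrow> \<bar>f y - f x\<bar> \<le> E + L * (y - x) ^ 2"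
  shows "\<bar>BSS_op \<alpha> \<beta> n q f x - f x\<bar> \<le> E + L * bss_second_moment \<alpha> \<beta> q n x"
proof -
  define G where "G k = (\<Sum>j. szasz_weight q n k j * f (stancu_node \<alpha> \<beta> q n k j))" for k
  define V where "V k = (\<Sum>j. szasz_weight q n k j * (stancu_node \<alpha> \<beta> q n k j - x) ^ 2)" for k
  have V_sums: "(\<lambda>j. szasz_weight q n k j * (stancu_node \<alpha> \<beta> q n k j - x) ^ 2) sums V k" for k
    using stancu_sq_dev_sums[of k x] unfolding V_def by (simp add: sums_iff)
  have G_dev: "\<bar>G k - f x\<bar> \<le> E + L * V k" for k
    using szasz_weight_sums_1[OF n_pos] szasz_weight_nonneg[OF n_pos]
      summable_sums[OF szasz_f_summable] V_sums f_dev[OF stancu_node_nonneg]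
    unfolding G_def by (rule weighted_mean_dev_le)
  have "summable (\<lambda>k. pqBS q n k x * G k)"
    using pqBS_sums_1[OF x_nonneg n_pos] pqBS_nonneg[OF x_nonneg] szasz_f_mean_bounded
    unfolding G_def by (intro summable_weighted_bounded) (auto simp: sums_iff)
  then have "(\<lambda>k. pqBS q n k x * G k) sums BSS_op \<alpha> \<beta> n q f x"
    unfolding BSS_op_eq[OF x_nonneg] G_def by (rule summable_sums)
  then show ?thesis
    by (rule weighted_mean_dev_le[OF pqBS_sums_1[OF x_nonneg n_pos] pqBS_nonneg[OF x_nonneg] _
          bss_second_moment_sums[OF x_nonneg] G_dev[unfolded V_def]])
qed

lemma BSS_op_rho0_le:
  assumes q_ge: "1/2 \<le> q" and "0 \<le> L" and "0 \<le> E" and "0 \<le> R"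
    and f_local: "\<And>x y. 0 \<le> x \<Longrightarrow> x \<le> R \<Longrightarrow> 0 \<le> y \<Longrightarrow> \<bar>f y - f x\<bar> \<le> E + L * (y - x)\<^sup>2"
  defines "B \<equiv> max (E + L * (6 + 2 * \<alpha> + \<alpha> ^ 2 + \<beta> ^ 2) / qint q n) (2 * M / (1 + R\<^sup>2))"
  shows "0 \<le> rho0_norm (\<lambda>x. BSS_op \<alpha> \<beta> n q f x - f x)"
    and "rho0_norm (\<lambda>x. BSS_op \<alpha> \<beta> n q f x - f x) \<le> B"
proof -
  have dev: "\<bar>BSS_op \<alpha> \<beta> n q f x - f x\<bar> \<le> B * (1 + x\<^sup>2)" if x_nonneg: "0 \<le> x" for x
  proof (cases "x \<le> R")
    case True
    define K where "K = 6 + 2 * \<alpha> + \<alpha> ^ 2 + \<beta> ^ 2"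
    have "\<bar>BSS_op \<alpha> \<beta> n q f x - f x\<bar> \<le> E + L * bss_second_moment \<alpha> \<beta> q n x"
      using x_nonneg \<open>0 \<le> L\<close> f_local[OF x_nonneg True] by (rule BSS_op_dev_le)
    also have "\<dots> \<le> E * (1 + x\<^sup>2) + L * (K * (1 + x\<^sup>2) / qint q n)"
      using bss_second_moment_le[OF x_nonneg q_ge] \<open>0 \<le> L\<close> \<open>0 \<le> E\<close>
        mult_left_mono[of 1 "1 + x\<^sup>2" E] unfolding K_def
      by (intro add_mono mult_left_mono) auto
    also have "\<dots> = (E + L * K / qint q n) * (1 + x\<^sup>2)" by (simp add: algebra_simps)
    also have "\<dots> \<le> B * (1 + x\<^sup>2)" unfolding B_def K_def by (intro mult_right_mono) auto
    finally show ?thesis .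
  next
    case False
    have "\<bar>BSS_op \<alpha> \<beta> n q f x - f x\<bar> \<le> 2 * M + 0 * bss_second_moment \<alpha> \<beta> q n x"
    proof (rule BSS_op_dev_le[OF x_nonneg])
      show "\<bar>f y - f x\<bar> \<le> 2 * M + 0 * (y - x)\<^sup>2" if "0 \<le> y" for y
        using f_bounded[OF x_nonneg] f_bounded[OF that] by simp
    qed simp
    also have "\<dots> \<le> 2 * M / (1 + R\<^sup>2) * (1 + x\<^sup>2)"
    proof -
      have "R\<^sup>2 \<le> x\<^sup>2" using False \<open>0 \<le> R\<close> by (intro power_mono) auto
      moreover have "0 \<le> M" using f_bounded[OF x_nonneg] by simp
      ultimately show ?thesis by (simp add: field_simps add_pos_nonneg mult_left_mono)
    qed
    also have "\<dots> \<le> B * (1 + x\<^sup>2)" unfolding B_def by (intro mult_right_mono) auto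
    finally show ?thesis .
  qed
  show "0 \<le> rho0_norm (\<lambda>x. BSS_op \<alpha> \<beta> n q f x - f x)" using dev by (rule rho0_norm_le(1))
  show "rho0_norm (\<lambda>x. BSS_op \<alpha> \<beta> n q f x - f x) \<le> B" using dev by (rule rho0_norm_le(2))
qed

end

end

end


lemma BSS_op_uniform_approx:
  fixes \<alpha> \<beta> M \<epsilon> :: real and f :: "real \<Rightarrow> real"
  assumes "0 \<le> \<alpha>" and "0 \<le> \<beta>" and "continuous_on {0..} f"
    and f_bounded: "\<And>y. 0 \<le> y \<Longrightarrow> \<bar>f y\<bar> \<le> M" and "0 < \<epsilon>"
  obtains \<eta> where "0 < \<eta>"
    and "\<And>q n. 0 < q \<Longrightarrow> q < 1 \<Longrightarrow> 0 < n \<Longrightarrow> 1 / qint q n < \<eta> \<Longrightarrow>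
      0 \<le> rho0_norm (\<lambda>x. BSS_op \<alpha> \<beta> n q f x - f x) \<and> rho0_norm (\<lambda>x. BSS_op \<alpha> \<beta> n q f x - f x) < \<epsilon>"
proof -
  define R where "R = 4 * M / \<epsilon> + 1"
  have "0 \<le> M" using f_bounded[of 0] by simp
  then have "1 \<le> R" unfolding R_def using \<open>0 < \<epsilon>\<close> by simp
  have tail: "2 * M / (1 + R\<^sup>2) \<le> \<epsilon> / 2"
  proof -
    have "R * 1 \<le> R * R" using \<open>1 \<le> R\<close> by (intro mult_left_mono) auto
    then have "R \<le> 1 + R\<^sup>2" by (simp add: power2_eq_square)
    then have "2 * M / (1 + R\<^sup>2) \<le> 2 * M / R"
      using \<open>1 \<le> R\<close> \<open>0 \<le> M\<close> by (intro divide_left_mono) auto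
    also have "\<dots> \<le> \<epsilon> / 2"
      using \<open>1 \<le> R\<close> \<open>0 < \<epsilon>\<close> unfolding R_def by (simp add: field_simps)
    finally show ?thesis .
  qed
  obtain L where "0 \<le> L"
    and f_local: "\<And>x y. 0 \<le> x \<Longrightarrow> x \<le> R \<Longrightarrow> 0 \<le> y \<Longrightarrow> \<bar>f y - f x\<bar> \<le> \<epsilon> / 4 + L * (y - x)\<^sup>2"
    using bounded_continuous_quadratic_majorant[OF assms(3) f_bounded, of "\<epsilon> / 4"] \<open>0 < \<epsilon>\<close> by auto
  define K where "K = 6 + 2 * \<alpha> + \<alpha> ^ 2 + \<beta> ^ 2"
  have "0 \<le> L * K" unfolding K_def using \<open>0 \<le> L\<close> \<open>0 \<le> \<alpha>\<close> by simp
  define \<eta> where "\<eta> = min (1/2) (\<epsilon> / (4 * (L * K + 1)))"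
  show ?thesis
  proof (rule that)
    show "0 < \<eta>" unfolding \<eta>_def using \<open>0 < \<epsilon>\<close> \<open>0 \<le> L * K\<close> by simp
    fix q n assume "0 < q" "q < 1" "0 < n" and small: "1 / qint q n < \<eta>"
    interpret qparam q using \<open>0 < q\<close> \<open>q < 1\<close> by unfold_locales
    have "1/2 \<le> q"
      using one_minus_q_le_inverse_qint[of n] \<open>0 < n\<close> small unfolding \<eta>_def by linarith
    have "L * K / qint q n = L * K * (1 / qint q n)" by simp
    also have "\<dots> \<le> L * K * (\<epsilon> / (4 * (L * K + 1)))"
      using small \<open>0 \<le> L * K\<close> unfolding \<eta>_def by (intro mult_left_mono) auto
    also have "\<dots> \<le> \<epsilon> / 4"
      using \<open>0 \<le> L * K\<close> \<open>0 < \<epsilon>\<close> by (simp add: field_simps)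
    finally have "L * K / qint q n \<le> \<epsilon> / 4" .
    then have "max (\<epsilon> / 4 + L * K / qint q n) (2 * M / (1 + R\<^sup>2)) < \<epsilon>"
      using tail \<open>0 < \<epsilon>\<close> by (simp only: max_less_iff_conj) linarith
    moreover have "0 \<le> \<epsilon> / 4" "0 \<le> R" using \<open>0 < \<epsilon>\<close> \<open>1 \<le> R\<close> by simp_all
    note bounds = BSS_op_rho0_le[OF \<open>0 < n\<close> assms(1,2) f_bounded \<open>1/2 \<le> q\<close> \<open>0 \<le> L\<close> this f_local]
    ultimately show "0 \<le> rho0_norm (\<lambda>x. BSS_op \<alpha> \<beta> n q f x - f x)
        \<and> rho0_norm (\<lambda>x. BSS_op \<alpha> \<beta> n q f x - f x) < \<epsilon>"
      unfolding K_def by linarith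
  qed
qed

theorem theorem3:
  fixes \<alpha> \<beta> a :: real and q :: "nat \<Rightarrow> real" and f :: "real \<Rightarrow> real"
  assumes "0 \<le> \<alpha>" and "\<alpha> \<le> \<beta>"
    and "\<And>n. 0 < q n \<and> q n < 1"
    and "st_lim q 1"
    and "st_lim (\<lambda>n. q n ^ n) a" and "a < 1"
    and "st_lim (\<lambda>n. 1 / qint (q n) n) 0"
    and "continuous_on {0..} f" and "bounded (f ` {0..})"
  shows "st_lim (\<lambda>n. rho0_norm (\<lambda>x. BSS_op \<alpha> \<beta> n (q n) f x - f x)) 0"
proof (rule st_lim_transfer[OF assms(7)])
  obtain M where f_bounded: "\<And>y. 0 \<le> y \<Longrightarrow> \<bar>f y\<bar> \<le> M"
    using assms(9) by (auto simp: bounded_iff)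
  have "0 \<le> \<beta>" using assms(1,2) by simp
  fix \<epsilon> :: real
  assume "0 < \<epsilon>"
  obtain \<eta> where "0 < \<eta>" and \<eta>: "\<And>q n. 0 < q \<Longrightarrow> q < 1 \<Longrightarrow> 0 < n \<Longrightarrow> 1 / qint q n < \<eta> \<Longrightarrow>
      0 \<le> rho0_norm (\<lambda>x. BSS_op \<alpha> \<beta> n q f x - f x) \<and> rho0_norm (\<lambda>x. BSS_op \<alpha> \<beta> n q f x - f x) < \<epsilon>"
    using BSS_op_uniform_approx[OF assms(1) \<open>0 \<le> \<beta>\<close> assms(8) f_bounded \<open>0 < \<epsilon>\<close>] by blast
  show "\<exists>\<eta>>0. \<forall>n\<ge>1. \<bar>1 / qint (q n) n - 0\<bar> < \<eta> \<longrightarrow>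
      \<bar>rho0_norm (\<lambda>x. BSS_op \<alpha> \<beta> n (q n) f x - f x) - 0\<bar> < \<epsilon>"
  proof (intro exI conjI allI impI)
    fix n :: nat
    assume "1 \<le> n" and "\<bar>1 / qint (q n) n - 0\<bar> < \<eta>"
    then have "0 \<le> rho0_norm (\<lambda>x. BSS_op \<alpha> \<beta> n (q n) f x - f x)
        \<and> rho0_norm (\<lambda>x. BSS_op \<alpha> \<beta> n (q n) f x - f x) < \<epsilon>"
      using assms(3)[of n] abs_ge_self[of "1 / qint (q n) n"] by (intro \<eta>) auto
    then show "\<bar>rho0_norm (\<lambda>x. BSS_op \<alpha> \<beta> n (q n) f x - f x) - 0\<bar> < \<epsilon>" by simp
  qed (rule \<open>0 < \<eta>\<close>)
qed

end
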